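(* Let $\mathcal P$ be as in the context. Consider any $(\mathbf x,\mathbf y)\in\mathcal P$ and $t\in[2,T]_{\mathbb Z}$. (i) If $y_t=0$, then $y_{t-j}-y_{t-j-1}\le 0$ for all $j\in[0,\min\{t-2,L-1\}]_{\mathbb Z}$. (ii) If $y_t=1$, then there exists at most one $j\in[0,\min\{t-2,L\}]_{\mathbb Z}$ such that $y_{t-j}-y_{t-j-1}=1$.
   Context: For integers $a,b$, $[a,b]_{\mathbb Z}=\{a,a+1,\dots,b\}$ if $a\le b$ and $\emptyset$ otherwise. Fix a positive integer $T$, positive integers $L$ (minimum up time) and $\ell$ (minimum down time), and reals $\overline C,\underline C,V,\overline V$ with $\overline C>\underline C>0$, $V>0$, $\overline V+V\le\overline C$ and $\underline C<\overline V<\underline C+V$. $\mathcal P$ is the set of $(\mathbf x,\mathbf y)=((x_1,\dots,x_T),(y_1,\dots,y_T))\in\mathbb R_+^T\times\{0,1\}^T$ satisfying: (i) $-y_{t-1}+y_t-y_k\le 0$ for all $t\in[2,T]_{\mathbb Z}$, $k\in[t,\min\{T,t+L-1\}]_{\mathbb Z}$; (ii) $y_{t-1}-y_t+y_k\le 1$ for all $t\in[2,T]_{\mathbb Z}$, $k\in[t,\min\{T,t+\ell-1\}]_{\mathbb Z}$; (iii) $-x_t+\underline C y_t\le 0$ and $x_t-\overline C y_t\le 0$ for all $t\in[1,T]_{\mathbb Z}$; (iv) $x_t-x_{t-1}\le Vy_{t-1}+\overline V(1-y_{t-1})$ for all $t\in[2,T]_{\mathbb Z}$; (v) $x_{t-1}-x_t\le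 Vy_t+\overline V(1-y_t)$ for all $t\in[2,T]_{\mathbb Z}$. *)

theory Defs
  imports Complex_Main
begin

text \<open>Vectors x, y in R^T are represented as functions on nat; only the
indices 1..T are relevant. The polytope/feasible set P of the context.\<close>

definition inP :: "nat \<Rightarrow> nat \<Rightarrow> nat \<Rightarrow> real \<Rightarrow> real \<Rightarrow> real \<Rightarrow> real \<Rightarrow>
    (nat \<Rightarrow> real) \<Rightarrow> (nat \<Rightarrow> real) \<Rightarrow> bool" where
  "inP T L l Cup Clo V Vup x y \<longleftrightarrow>
     (\<forall>t\<in>{1..T}. x t \<ge> 0) \<and>
     (\<forall>t\<in>{1..T}. y t = 0 \<or> y t = 1) \<and>
     (\<forall>t\<in>{2..T}. \<forall>k\<in>{t..min T (t + L - 1)}. - y (t - 1) + y t - y k \<le> 0) \<and>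
     (\<forall>t\<in>{2..T}. \<forall>k\<in>{t..min T (t + l - 1)}. y (t - 1) - y t + y k \<le> 1) \<and>
     (\<forall>t\<in>{1..T}. - x t + Clo * y t \<le> 0 \<and> x t - Cup * y t \<le> 0) \<and>
     (\<forall>t\<in>{2..T}. x t - x (t - 1) \<le> V * y (t - 1) + Vup * (1 - y (t - 1))) \<and>
     (\<forall>t\<in>{2..T}. x (t - 1) - x t \<le> V * y t + Vup * (1 - y t))"

end

theory Submission
  imports Defs
begin

text \<open>Both parts come from the minimum-up-time constraints (i) alone: a startup at
  \<open>s\<close> forces \<open>y k = 1\<close> for \<open>k \<in> [s, s + L - 1]\<close>. So a startup within
  \<open>L - 1\<close> periods before \<open>t\<close> rules out \<open>y t = 0\<close>, and of two startups at most
  \<open>L\<close> periods apart the second would find the unit already on, giving the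
  impossible value \<open>y = 2\<close>.\<close>

definition min_up_time :: "nat \<Rightarrow> nat \<Rightarrow> (nat \<Rightarrow> real) \<Rightarrow> bool" where
  "min_up_time T L y \<longleftrightarrow>
     (\<forall>t\<in>{2..T}. \<forall>k\<in>{t..min T (t + L - 1)}. - y (t - 1) + y t - y k \<le> 0)"

definition binary_on :: "nat set \<Rightarrow> (nat \<Rightarrow> real) \<Rightarrow> bool" where
  "binary_on A y \<longleftrightarrow> (\<forall>t\<in>A. y t = 0 \<or> y t = 1)"

lemma inP_min_up_time: "inP T L l Cup Clo V Vup x y \<Longrightarrow> min_up_time T L y"
  unfolding inP_def min_up_time_def by blast

lemma inP_binary_on: "inP T L l Cup Clo V Vup x y \<Longrightarrow> binary_on {1..T} y"
  unfolding inP_def binary_on_def by blast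

lemma min_up_time_startup_le:
  assumes "min_up_time T L y" and "s \<in> {2..T}" and "k \<in> {s..min T (s + L - 1)}"
  shows "y s - y (s - 1) \<le> y k"
  using assms unfolding min_up_time_def by fastforce

lemma min_up_time_startups_apart:
  assumes up: "min_up_time T L y" and bin: "binary_on {1..T} y"
    and "2 \<le> s1" "s1 < s2" "s2 \<le> T" "s2 \<le> s1 + L"
    and start1: "y s1 - y (s1 - 1) = 1"
  shows "y s2 - y (s2 - 1) \<noteq> 1"
proof
  assume start2: "y s2 - y (s2 - 1) = 1"
  have "y s1 - y (s1 - 1) \<le> y (s2 - 1)"
    by (rule min_up_time_startup_le[OF up]) (use assms in auto)
  moreover have "s2 - 1 \<in> {1..T}" "s2 \<in> {1..T}" using assms by auto
  ultimately have "y (s2 - 1) = 1" using start1 bin unfolding binary_on_def by force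
  with start2 have "y s2 = 2" by simp
  with bin \<open>s2 \<in> {1..T}\<close> show False
    unfolding binary_on_def by force
qed

theorem lemma1:
  fixes T L l :: nat and Cup Clo V Vup :: real and x y :: "nat \<Rightarrow> real" and t :: nat
  assumes "T > 0" and "L > 0" and "l > 0"
    and "Cup > Clo" and "Clo > 0" and "V > 0" and "Vup + V \<le> Cup"
    and "Clo < Vup" and "Vup < Clo + V"
    and P: "inP T L l Cup Clo V Vup x y"
    and t: "t \<in> {2..T}"
  shows "(y t = 0 \<longrightarrow>
            (\<forall>j\<in>{0..min (t - 2) (L - 1)}. y (t - j) - y (t - j - 1) \<le> 0)) \<and>
         (y t = 1 \<longrightarrow>
            (\<forall>j1\<in>{0..min (t - 2) L}. \<forall>j2\<in>{0..min (t - 2) L}.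
               y (t - j1) - y (t - j1 - 1) = 1 \<and> y (t - j2) - y (t - j2 - 1) = 1
               \<longrightarrow> j1 = j2))"
proof -
  have up: "min_up_time T L y" and bin: "binary_on {1..T} y"
    using inP_min_up_time[OF P] inP_binary_on[OF P] .
  have no_startup: "y (t - j) - y (t - j - 1) \<le> y t" if "j \<le> min (t - 2) (L - 1)" for j
    by (rule min_up_time_startup_le[OF up]) (use that t \<open>L > 0\<close> in auto)
  have startups_apart: "y (t - j1) - y (t - j1 - 1) \<noteq> 1"
    if "j2 \<le> min (t - 2) L" "j1 < j2" "y (t - j2) - y (t - j2 - 1) = 1" for j1 j2
    by (rule min_up_time_startups_apart[OF up bin, of "t - j2"]) (use that t in auto)
  show ?thesis
  proof (intro conjI impI ballI)
    fix j assume "y t = 0" "j \<in> {0..min (t - 2) (L - 1)}"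
    then show "y (t - j) - y (t - j - 1) \<le> 0" using no_startup by fastforce
  next
    fix j1 j2 assume "j1 \<in> {0..min (t - 2) L}" "j2 \<in> {0..min (t - 2) L}"
      "y (t - j1) - y (t - j1 - 1) = 1 \<and> y (t - j2) - y (t - j2 - 1) = 1"
    then show "j1 = j2"
      using startups_apart[of j2 j1] startups_apart[of j1 j2]
      by (cases j1 j2 rule: linorder_cases) auto
  qed
qed

end
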